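(* Let $G=(V,E)$ be a connected graph and $\Theta:E\to[0,\pi/2]$. Suppose that $P$ is a disk pattern in $\mathbb{C}$ which realizes $(G,\Theta)$. If $P$ is locally finite in $\mathbb{C}$, then $G$ is VEL-parabolic.
   Context: A disk pattern in $\mathbb{C}$ is a collection of closed round disks in $\mathbb{C}$ in which no disk has its boundary contained in the union of two other disks and no disk is the Hausdorff limit of a sequence of distinct disks. Its contact graph has one vertex per disk, with an edge when the disks intersect. The dihedral angle of two intersecting disks $D_1,D_2$ is the angle in $[0,\pi)$ between the clockwise tangent of $\partial D_1$ and the counterclockwise tangent of $\partial D_2$ at a point of $\partial D_1\cap\partial D_2$. Let $\tilde G$ be obtained from $G$ by adding the edge $[v_1,v_3]$ (if not present) whenever $v_0,v_1,v_2,v_3$ form a simple loop with $\Theta([v_{i-1},v_i])=\pi/2$, $i=1,\dots,4$ ($v_4=v_0$), and $\Theta([v_0,v_2])=0$; $\tilde\Theta=\Theta$ on $E$ and $0$ on added edges. A pattern $P=\{P(v)\}_{v\in V}$ realizes $(G,\Theta)$ if its contact graph is (via $v\mapsto P(v)$) isomorphic to $\tilde G$ with dihedral angles $\tilde\Theta$. Locally finite in $\mathbb{C}$: each compact subset of $\mathbb{C}$ meets only finitely many disks. Vertex extremal length: a vertex metric is $\eta:V\to[0,\infty)$, with area $\sum_v\eta(v)^2$; a vertex curve $\gamma\subseteq V$ has length $\sum_{v\in\gamma}\eta(v)$. For a family $\Gamma$ of vertex curves, $\eta$ is admissible if every $\gamma\in\Gamma$ has length $\ge1$; $\mathrm{MOD}(\Gamma)$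 is the infimum of areas of admissible metrics and $\mathrm{VEL}(\Gamma)=1/\mathrm{MOD}(\Gamma)$ ($+\infty$ if $\Gamma$ is empty). A path is a finite or infinite sequence of vertices with consecutive ones adjacent in $G$, identified with its vertex set. For nonvoid $V_1$, a path joining $V_1$ and $\infty$ starts at a vertex of $V_1$ and passes through infinitely many vertices; $\mathrm{VEL}(V_1,\infty)$ is the VEL of the family of such paths. A connected graph is VEL-parabolic if $\mathrm{VEL}(V_0,\infty)=\infty$ for a (equivalently any) finite nonvoid $V_0\subseteq V$. *)

theory Defs
  imports "HOL-Analysis.Analysis"
begin

text \<open>A graph is given by a vertex set V and a symmetric, irreflexive adjacency
  relation adj on V. Undirected edges are the 2-sets {u,w} with adj u w.\<close>

definition simple_graph :: "'v set \<Rightarrow> ('v \<Rightarrow> 'v \<Rightarrow> bool) \<Rightarrow> bool" where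
  "simple_graph V adj \<longleftrightarrow>
     (\<forall>u w. adj u w \<longrightarrow> u \<in> V \<and> w \<in> V \<and> u \<noteq> w \<and> adj w u)"

definition connected_graph :: "'v set \<Rightarrow> ('v \<Rightarrow> 'v \<Rightarrow> bool) \<Rightarrow> bool" where
  "connected_graph V adj \<longleftrightarrow> V \<noteq> {} \<and> (\<forall>u\<in>V. \<forall>w\<in>V. adj\<^sup>*\<^sup>* u w)"

definition added_edge :: "'v set \<Rightarrow> ('v \<Rightarrow> 'v \<Rightarrow> bool) \<Rightarrow> ('v set \<Rightarrow> real) \<Rightarrow> 'v \<Rightarrow> 'v \<Rightarrow> bool" where
  "added_edge V adj \<Theta> v1 v3 \<longleftrightarrow>
     (\<exists>v0 v2. v0 \<in> V \<and> v1 \<in> V \<and> v2 \<in> V \<and> v3 \<in> V \<and> distinct [v0, v1, v2, v3] \<and>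
        adj v0 v1 \<and> adj v1 v2 \<and> adj v2 v3 \<and> adj v3 v0 \<and>
        \<Theta> {v0, v1} = pi / 2 \<and> \<Theta> {v1, v2} = pi / 2 \<and>
        \<Theta> {v2, v3} = pi / 2 \<and> \<Theta> {v3, v0} = pi / 2 \<and>
        adj v0 v2 \<and> \<Theta> {v0, v2} = 0)"

definition tilde_adj :: "'v set \<Rightarrow> ('v \<Rightarrow> 'v \<Rightarrow> bool) \<Rightarrow> ('v set \<Rightarrow> real) \<Rightarrow> 'v \<Rightarrow> 'v \<Rightarrow> bool" where
  "tilde_adj V adj \<Theta> u w \<longleftrightarrow> adj u w \<or> added_edge V adj \<Theta> u w"

definition tilde_Theta :: "('v \<Rightarrow> 'v \<Rightarrow> bool) \<Rightarrow> ('v set \<Rightarrow> real) \<Rightarrow> 'v \<Rightarrow> 'v \<Rightarrow> real" where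
  "tilde_Theta adj \<Theta> u w = (if adj u w then \<Theta> {u, w} else 0)"

text \<open>A closed round disk is represented by (center, radius) with radius > 0.\<close>

definition disk :: "complex \<times> real \<Rightarrow> complex set" where
  "disk d = cball (fst d) (snd d)"

definition circ :: "complex \<times> real \<Rightarrow> complex set" where
  "circ d = sphere (fst d) (snd d)"

definition hausdorff_dist :: "complex set \<Rightarrow> complex set \<Rightarrow> real" where
  "hausdorff_dist S T = max (SUP x\<in>S. infdist x T) (SUP y\<in>T. infdist y S)"

definition disk_pattern :: "(complex \<times> real) set \<Rightarrow> bool" where
  "disk_pattern D \<longleftrightarrow>
     (\<forall>d\<in>D. snd d > 0) \<and>
     (\<forall>d\<in>D. \<forall>d1\<in>D. \<forall>d2\<in>D. d1 \<noteq> d \<and> d2 \<noteq> d \<longrightarrow> \<not> circ d \<subseteq> disk d1 \<union> disk d2) \<and>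
     (\<forall>d\<in>D. \<not> (\<exists>f::nat \<Rightarrow> complex \<times> real. (\<forall>n. f n \<in> D) \<and> inj f \<and>
                  (\<lambda>n. hausdorff_dist (disk (f n)) (disk d)) \<longlonglongrightarrow> 0))"

definition vec_angle :: "complex \<Rightarrow> complex \<Rightarrow> real" where
  "vec_angle x y = arccos ((x \<bullet> y) / (norm x * norm y))"

text \<open>Dihedral angle of D1 and D2: angle in [0,pi) between the clockwise tangent of
  the boundary of D1 and the counterclockwise tangent of the boundary of D2 at a
  common boundary point p.\<close>
definition has_dihedral_angle :: "complex \<times> real \<Rightarrow> complex \<times> real \<Rightarrow> real \<Rightarrow> bool" where
  "has_dihedral_angle d1 d2 \<theta> \<longleftrightarrow>
     (\<exists>p \<in> circ d1 \<inter> circ d2.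
        \<theta> = vec_angle (- \<i> * (p - fst d1)) (\<i> * (p - fst d2)) \<and> 0 \<le> \<theta> \<and> \<theta> < pi)"

definition realizes ::
  "('v \<Rightarrow> complex \<times> real) \<Rightarrow> 'v set \<Rightarrow> ('v \<Rightarrow> 'v \<Rightarrow> bool) \<Rightarrow> ('v set \<Rightarrow> real) \<Rightarrow> bool" where
  "realizes P V adj \<Theta> \<longleftrightarrow>
     inj_on P V \<and> disk_pattern (P ` V) \<and>
     (\<forall>u\<in>V. \<forall>w\<in>V. u \<noteq> w \<longrightarrow>
        (disk (P u) \<inter> disk (P w) \<noteq> {} \<longleftrightarrow> tilde_adj V adj \<Theta> u w)) \<and>
     (\<forall>u\<in>V. \<forall>w\<in>V. tilde_adj V adj \<Theta> u w \<longrightarrow>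
        has_dihedral_angle (P u) (P w) (tilde_Theta adj \<Theta> u w))"

definition locally_finite_pattern :: "('v \<Rightarrow> complex \<times> real) \<Rightarrow> 'v set \<Rightarrow> bool" where
  "locally_finite_pattern P V \<longleftrightarrow>
     (\<forall>K. compact K \<longrightarrow> finite {v\<in>V. disk (P v) \<inter> K \<noteq> {}})"

definition vertex_metric :: "'v set \<Rightarrow> ('v \<Rightarrow> real) \<Rightarrow> bool" where
  "vertex_metric V \<eta> \<longleftrightarrow> (\<forall>v\<in>V. \<eta> v \<ge> 0)"

definition metric_area :: "'v set \<Rightarrow> ('v \<Rightarrow> real) \<Rightarrow> ennreal" where
  "metric_area V \<eta> = (\<Sum>\<^sub>\<infinity>v\<in>V. ennreal ((\<eta> v)\<^sup>2))"

definition curve_length :: "('v \<Rightarrow> real) \<Rightarrow> 'v set \<Rightarrow> ennreal" where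
  "curve_length \<eta> \<gamma> = (\<Sum>\<^sub>\<infinity>v\<in>\<gamma>. ennreal (\<eta> v))"

definition admissible :: "'v set \<Rightarrow> 'v set set \<Rightarrow> ('v \<Rightarrow> real) \<Rightarrow> bool" where
  "admissible V \<Gamma> \<eta> \<longleftrightarrow> vertex_metric V \<eta> \<and> (\<forall>\<gamma>\<in>\<Gamma>. curve_length \<eta> \<gamma> \<ge> 1)"

definition MOD :: "'v set \<Rightarrow> 'v set set \<Rightarrow> ennreal" where
  "MOD V \<Gamma> = (INF \<eta>\<in>{\<eta>. admissible V \<Gamma> \<eta>}. metric_area V \<eta>)"

definition VEL :: "'v set \<Rightarrow> 'v set set \<Rightarrow> ennreal" where
  "VEL V \<Gamma> = (if \<Gamma> = {} then \<infinity> else inverse (MOD V \<Gamma>))"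

definition paths_to_infinity :: "('v \<Rightarrow> 'v \<Rightarrow> bool) \<Rightarrow> 'v set \<Rightarrow> 'v set set" where
  "paths_to_infinity adj V1 =
     {range p | p :: nat \<Rightarrow> 'v. p 0 \<in> V1 \<and> (\<forall>n. adj (p n) (p (Suc n))) \<and> infinite (range p)}"

definition VEL_parabolic :: "'v set \<Rightarrow> ('v \<Rightarrow> 'v \<Rightarrow> bool) \<Rightarrow> bool" where
  "VEL_parabolic V adj \<longleftrightarrow>
     (\<exists>V0. finite V0 \<and> V0 \<noteq> {} \<and> V0 \<subseteq> V \<and> VEL V (paths_to_infinity adj V0) = \<infinity>)"

end

theory Submission
  imports Defs
begin

text \<open>Since all angles are at most pi/2, two disks of the pattern are disjoint or meet
  non-obtusely, so that r_u^2 + r_w^2 <= |c_u - c_w|^2; hence no point lies in more than five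
  disks (one per closed quadrant around it, plus one centred at it). In the annulus
  a <= |z| <= 2a charge every disk meeting it its diameter, capped at a: a path of disks crossing
  the annulus has weight at least a, while the areas of inscribed balls bound the total squared
  weight by 720 a^2. Local finiteness provides N annuli with pairwise disjoint sets of disks;
  the average of their normalized metrics is admissible for the paths to infinity and has area at
  most 720/N, so their modulus vanishes.\<close>

lemma dist_gt_if_disjoint_cballs:
  fixes x y :: "'a::real_normed_vector"
  assumes "0 < r" "0 < s" and disj: "cball x r \<inter> cball y s = {}"
  shows "r + s < dist x y"
proof (rule ccontr)
  assume "\<not> r + s < dist x y"
  then have le: "dist x y \<le> r + s" by simp
  define z where "z = x + (r / (r + s)) *\<^sub>R (y - x)"
  have "dist x z = r / (r + s) * dist x y"
    using assms by (simp add: z_def dist_norm norm_minus_commute)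
  also have "\<dots> \<le> r / (r + s) * (r + s)"
    using le assms by (intro mult_left_mono) auto
  also have "\<dots> = r"
    using assms by simp
  finally have "z \<in> cball x r" by simp
  have "y - z = (1 - r / (r + s)) *\<^sub>R (y - x)"
    by (simp add: z_def algebra_simps)
  also have "1 - r / (r + s) = s / (r + s)"
    using assms by (simp add: field_simps)
  finally have "y - z = (s / (r + s)) *\<^sub>R (y - x)" .
  then have "dist y z = s / (r + s) * dist x y"
    using assms by (simp add: dist_norm norm_minus_commute)
  also have "\<dots> \<le> s / (r + s) * (r + s)"
    using le assms by (intro mult_left_mono) auto
  also have "\<dots> = s"
    using assms by simp
  finally have "z \<in> cball y s" by simp
  with \<open>z \<in> cball x r\<close> disj show False by blast
qed

lemma inner_nonneg_if_vec_angle_le_pi2: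
  assumes "vec_angle x y \<le> pi / 2"
  shows "0 \<le> x \<bullet> y"
proof -
  define t where "t = x \<bullet> y / (norm x * norm y)"
  have "\<bar>t\<bar> \<le> 1"
    using Cauchy_Schwarz_ineq2[of x y]
    by (cases "norm x * norm y = 0") (simp_all add: t_def abs_divide divide_le_eq_1)
  then have t: "-1 \<le> t" "t \<le> 1"
    by (simp_all add: abs_le_iff)
  have "0 \<le> cos (arccos t)"
    using assms arccos_lbound[OF t] by (intro cos_ge_zero) (auto simp: vec_angle_def t_def)
  then have "0 \<le> t"
    using t by simp
  then show ?thesis
    using Cauchy_Schwarz_ineq2[of x y] by (auto simp: t_def zero_le_divide_iff)
qed

text \<open>The tangents at a common boundary point p are the radii turned by a quarter turn, so the
  dihedral angle is the angle between p - c1 and c2 - p. It is at most pi/2 exactly when the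
  angle of the triangle c1 p c2 at p is at least pi/2.\<close>
lemma radii_le_dist_centers_if_dihedral_angle_le_pi2:
  assumes "has_dihedral_angle d1 d2 \<theta>" "\<theta> \<le> pi / 2"
  shows "(snd d1)\<^sup>2 + (snd d2)\<^sup>2 \<le> (dist (fst d1) (fst d2))\<^sup>2"
proof -
  obtain p where p: "p \<in> circ d1" "p \<in> circ d2"
    and \<theta>: "\<theta> = vec_angle (- \<i> * (p - fst d1)) (\<i> * (p - fst d2))"
    using assms(1) unfolding has_dihedral_angle_def by blast
  have "0 \<le> (- \<i> * (p - fst d1)) \<bullet> (\<i> * (p - fst d2))"
    by (rule inner_nonneg_if_vec_angle_le_pi2) (use assms(2) \<theta> in simp)
  moreover have "(- \<i> * z) \<bullet> (\<i> * w) = - (z \<bullet> w)" for z w :: complex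
    by (simp add: inner_complex_def)
  ultimately have "(p - fst d1) \<bullet> (p - fst d2) \<le> 0"
    by simp
  moreover have "norm (p - fst d1) = snd d1" "norm (p - fst d2) = snd d2"
    using p by (auto simp: circ_def dist_norm norm_minus_commute)
  moreover have "dist (fst d1) (fst d2) = norm ((p - fst d1) - (p - fst d2))"
    by (simp add: dist_norm norm_minus_commute)
  ultimately show ?thesis
    using dot_norm_neg[of "p - fst d1" "p - fst d2"] by simp
qed

definition quadrant :: "complex \<Rightarrow> nat" where
  "quadrant z =
     (if z = 0 then 0
      else if 0 < Re z \<and> 0 \<le> Im z then 1
      else if Re z \<le> 0 \<and> 0 < Im z then 2
      else if Re z < 0 \<and> Im z \<le> 0 then 3 else 4)"

lemma quadrant_le_4: "quadrant z \<le> 4"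
  by (simp add: quadrant_def)

lemma quadrant_eq_0_iff: "quadrant z = 0 \<longleftrightarrow> z = 0"
  by (simp add: quadrant_def)

lemma inner_pos_if_same_quadrant:
  assumes "quadrant z = quadrant w" "z \<noteq> 0" "w \<noteq> 0"
  shows "0 < z \<bullet> w"
proof -
  have "Re z \<noteq> 0 \<or> Im z \<noteq> 0" "Re w \<noteq> 0 \<or> Im w \<noteq> 0"
    using assms(2,3) complex_eq_iff by auto
  then consider "0 < Re z \<and> 0 \<le> Im z \<and> 0 < Re w \<and> 0 \<le> Im w"
    | "Re z \<le> 0 \<and> 0 < Im z \<and> Re w \<le> 0 \<and> 0 < Im w"
    | "Re z < 0 \<and> Im z \<le> 0 \<and> Re w < 0 \<and> Im w \<le> 0"
    | "0 \<le> Re z \<and> Im z < 0 \<and> 0 \<le> Re w \<and> Im w < 0"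
    using assms unfolding quadrant_def by (auto split: if_splits)
  then show ?thesis
    unfolding inner_complex_def
    by cases (smt (verit) mult_nonneg_nonneg mult_pos_pos mult_nonpos_nonpos mult_neg_neg)+
qed

lemma cball_inside_cball_near:
  fixes c q :: "'a::real_normed_vector"
  assumes "0 \<le> s" "s \<le> R" "q \<in> cball c R"
  shows "\<exists>c'. cball c' s \<subseteq> cball c R \<and> dist q c' \<le> s"
proof (cases "dist c q \<le> s")
  case True
  then show ?thesis
    using assms(2) by (intro exI[of _ c]) (auto simp: dist_commute)
next
  case False
  define d where "d = dist c q"
  define c' where "c' = q + (s / d) *\<^sub>R (c - q)"
  have d: "s < d" "d \<le> R"
    using False assms(3) by (auto simp: d_def)
  then have "0 \<le> 1 - s / d"
    using assms(1) by simp
  have "dist q c' = s / d * d"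
    using d assms(1) by (simp add: c'_def dist_norm d_def dist_commute)
  then have "dist q c' = s"
    using d assms(1) by simp
  moreover have "c - c' = (1 - s / d) *\<^sub>R (c - q)"
    by (simp add: c'_def algebra_simps)
  then have "dist c c' = (1 - s / d) * d"
    using \<open>0 \<le> 1 - s / d\<close> by (simp add: dist_norm d_def dist_commute)
  then have "dist c c' = d - s"
    using d assms(1) by (simp add: algebra_simps)
  have "cball c' s \<subseteq> cball c R"
  proof
    fix y
    assume "y \<in> cball c' s"
    then have "dist c y \<le> dist c c' + s"
      using dist_triangle[of c y c'] by simp
    then show "y \<in> cball c R"
      using \<open>dist c c' = d - s\<close> d by simp
  qed
  ultimately show ?thesis by blast
qed

lemma power2_sum_eq_sum_power2_if_disjoint_support:
  fixes x :: "'a \<Rightarrow> 'b::comm_semiring_1"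
  assumes "finite I" "\<And>i j. i \<in> I \<Longrightarrow> j \<in> I \<Longrightarrow> i \<noteq> j \<Longrightarrow> x i = 0 \<or> x j = 0"
  shows "(\<Sum>i\<in>I. x i)\<^sup>2 = (\<Sum>i\<in>I. (x i)\<^sup>2)"
proof (cases "\<forall>i\<in>I. x i = 0")
  case True
  then show ?thesis by simp
next
  case False
  then obtain j where j: "j \<in> I" "x j \<noteq> 0" by auto
  then have "\<forall>i\<in>I - {j}. x i = 0"
    using assms(2) by blast
  then have "(\<Sum>i\<in>I - {j}. x i) = 0" "(\<Sum>i\<in>I - {j}. (x i)\<^sup>2) = 0"
    by (simp_all add: sum.neutral)
  then have "(\<Sum>i\<in>I. x i) = x j" "(\<Sum>i\<in>I. (x i)\<^sup>2) = (x j)\<^sup>2"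
    using sum.remove[OF assms(1) j(1), of x] sum.remove[OF assms(1) j(1), of "\<lambda>i. (x i)\<^sup>2"]
    by simp_all
  then show ?thesis by simp
qed

lemma sum_le_curve_length:
  assumes "finite F" "F \<subseteq> \<gamma>" "\<And>v. 0 \<le> \<eta> v"
  shows "ennreal (\<Sum>v\<in>F. \<eta> v) \<le> curve_length \<eta> \<gamma>"
proof -
  have "ennreal (\<Sum>v\<in>F. \<eta> v) = (\<Sum>\<^sub>\<infinity>v\<in>F. ennreal (\<eta> v))"
    using assms(1,3) by (simp add: sum_ennreal)
  also have "\<dots> \<le> (\<Sum>\<^sub>\<infinity>v\<in>\<gamma>. ennreal (\<eta> v))"
    using assms(2) by (intro infsum_mono_neutral) (auto intro: nonneg_summable_on_complete)
  finally show ?thesis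
    by (simp add: curve_length_def)
qed

lemma metric_area_eq_sum:
  assumes "finite T" "T \<subseteq> V" "\<And>v. v \<notin> T \<Longrightarrow> \<eta> v = 0"
  shows "metric_area V \<eta> = ennreal (\<Sum>v\<in>T. (\<eta> v)\<^sup>2)"
proof -
  have "metric_area V \<eta> = (\<Sum>\<^sub>\<infinity>v\<in>T. ennreal ((\<eta> v)\<^sup>2))"
    unfolding metric_area_def using assms(2,3) by (intro infsum_cong_neutral) auto
  also have "\<dots> = ennreal (\<Sum>v\<in>T. (\<eta> v)\<^sup>2)"
    using assms(1) by (simp add: sum_ennreal)
  finally show ?thesis .
qed

text \<open>The assumption on the centers says that any two disks are disjoint or meet at a dihedral
  angle of at most pi/2.\<close>
locale nonobtuse_disk_pattern =
  fixes V :: "'v set" and adj :: "'v \<Rightarrow> 'v \<Rightarrow> bool" and P :: "'v \<Rightarrow> complex \<times> real"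
  assumes radius_pos: "v \<in> V \<Longrightarrow> 0 < snd (P v)"
    and radii_le_dist_centers: "u \<in> V \<Longrightarrow> w \<in> V \<Longrightarrow> u \<noteq> w \<Longrightarrow>
      (snd (P u))\<^sup>2 + (snd (P w))\<^sup>2 \<le> (dist (fst (P u)) (fst (P w)))\<^sup>2"
    and adj_disks_meet: "adj u w \<Longrightarrow> u \<in> V \<and> w \<in> V \<and> disk (P u) \<inter> disk (P w) \<noteq> {}"
    and locally_finite: "locally_finite_pattern P V"
begin

abbreviation center :: "'v \<Rightarrow> complex" where "center v \<equiv> fst (P v)"
abbreviation radius :: "'v \<Rightarrow> real" where "radius v \<equiv> snd (P v)"

lemma mem_disk: "x \<in> disk (P v) \<longleftrightarrow> dist (center v) x \<le> radius v"
  by (simp add: disk_def)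

lemma center_in_disk: "v \<in> V \<Longrightarrow> center v \<in> disk (P v)"
  using radius_pos[of v] by (simp add: mem_disk)

lemma disk_subset_ball_norm_center:
  "disk (P v) \<subseteq> ball 0 R" if "norm (center v) + radius v < R"
proof
  fix y
  assume "y \<in> disk (P v)"
  then have "norm y \<le> norm (center v) + radius v"
    using norm_triangle_ineq2[of y "center v"] by (simp add: mem_disk dist_norm norm_minus_commute)
  then show "y \<in> ball 0 R"
    using that by simp
qed

lemma dist_le_diameter_disk:
  "x \<in> disk (P v) \<Longrightarrow> y \<in> disk (P v) \<Longrightarrow> dist x y \<le> 2 * radius v"
  using dist_triangle[of x y "center v"] by (simp add: mem_disk dist_commute)

lemma path_in_V:
  assumes "\<And>n. adj (p n) (p (Suc n))"
  shows "p n \<in> V"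
  using adj_disks_meet[OF assms] by blast

lemma inner_centers_nonpos:
  assumes "u \<in> V" "w \<in> V" "u \<noteq> w" "x \<in> disk (P u)" "x \<in> disk (P w)"
  shows "(center u - x) \<bullet> (center w - x) \<le> 0"
proof -
  have "(norm (center u - x))\<^sup>2 \<le> (radius u)\<^sup>2" "(norm (center w - x))\<^sup>2 \<le> (radius w)\<^sup>2"
    using assms radius_pos by (auto simp: mem_disk dist_norm intro: power_mono)
  moreover have "norm ((center u - x) - (center w - x)) = dist (center u) (center w)"
    by (simp add: dist_norm)
  ultimately show ?thesis
    using dot_norm_neg[of "center u - x" "center w - x"] radii_le_dist_centers[OF assms(1-3)]
    by simp
qed

text \<open>Two disks through x have centers in different closed quadrants around x, and at most one
  center equals x.\<close>
lemma card_disks_containing_le_5: "card {v \<in> V. x \<in> disk (P v)} \<le> 5"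
proof -
  let ?M = "{v \<in> V. x \<in> disk (P v)}"
  have "u = w"
    if u: "u \<in> ?M" and w: "w \<in> ?M" and q: "quadrant (center u - x) = quadrant (center w - x)"
    for u w
  proof (rule ccontr)
    assume "u \<noteq> w"
    have "center u - x = 0 \<longleftrightarrow> center w - x = 0"
      using q by (simp only: quadrant_eq_0_iff[symmetric])
    moreover have "center u \<noteq> x"
    proof
      assume "center u = x"
      then have "(radius u)\<^sup>2 + (radius w)\<^sup>2 \<le> 0"
        using radii_le_dist_centers[of u w] u w \<open>u \<noteq> w\<close> \<open>center u - x = 0 \<longleftrightarrow> center w - x = 0\<close>
        by simp
      then show False
        using radius_pos[of u] u by (simp add: sum_power2_le_zero_iff)
    qed
    ultimately have "0 < (center u - x) \<bullet> (center w - x)"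
      using inner_pos_if_same_quadrant[OF q] by simp
    moreover have "(center u - x) \<bullet> (center w - x) \<le> 0"
      using u w \<open>u \<noteq> w\<close> by (simp add: inner_centers_nonpos)
    ultimately show False
      by simp
  qed
  then have "inj_on (\<lambda>v. quadrant (center v - x)) ?M"
    by (rule inj_onI)
  moreover have "(\<lambda>v. quadrant (center v - x)) ` ?M \<subseteq> {0..4}"
    using quadrant_le_4 by auto
  ultimately have "card ?M \<le> card {0..4::nat}"
    by (rule card_inj_on_le) simp
  then show ?thesis
    by simp
qed

lemma finite_disks_meeting: "compact K \<Longrightarrow> finite {v \<in> V. disk (P v) \<inter> K \<noteq> {}}"
  using locally_finite unfolding locally_finite_pattern_def by blast

lemma finite_disks_containing: "finite {v \<in> V. x \<in> disk (P v)}"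
  using finite_disks_meeting[of "{x}"] by (auto elim: rev_finite_subset)

lemma sum_emeasure_le_5_emeasure:
  assumes "finite S" "S \<subseteq> V" "closed C"
    and B: "\<And>v. v \<in> S \<Longrightarrow> closed (B v) \<and> B v \<subseteq> disk (P v) \<inter> C"
  shows "(\<Sum>v\<in>S. emeasure lborel (B v)) \<le> 5 * emeasure lborel C"
proof -
  have "(\<Sum>v\<in>S. indicator (B v) x) \<le> 5 * (indicator C x :: ennreal)" for x :: complex
  proof (cases "x \<in> C")
    case True
    have "(\<Sum>v\<in>S. indicator (B v) x :: ennreal) = of_nat (card {v \<in> S. x \<in> B v})"
      using assms(1) by (simp add: indicator_def sum.If_cases Int_def)
    also have "card {v \<in> S. x \<in> B v} \<le> card {v \<in> V. x \<in> disk (P v)}"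
      using assms(2) B finite_disks_containing by (intro card_mono) auto
    also have "\<dots> \<le> 5"
      by (rule card_disks_containing_le_5)
    finally show ?thesis
      using True by (simp add: of_nat_le_iff)
  next
    case False
    then have "x \<notin> B v" if "v \<in> S" for v
      using B that by blast
    then show ?thesis
      by (simp add: sum.neutral)
  qed
  then have "(\<integral>\<^sup>+ x. (\<Sum>v\<in>S. indicator (B v) x) \<partial>lborel) \<le> (\<integral>\<^sup>+ x. 5 * indicator C x \<partial>lborel)"
    by (intro nn_integral_mono)
  moreover have "(\<integral>\<^sup>+ x. (\<Sum>v\<in>S. indicator (B v) x) \<partial>lborel) = (\<Sum>v\<in>S. emeasure lborel (B v))"
    using B by (subst nn_integral_sum) auto
  ultimately show ?thesis
    using assms(3) by (simp add: nn_integral_cmult)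
qed

text \<open>Comparison of areas: the balls cover each point at most five times.\<close>
lemma sum_sq_radii_inscribed_le:
  assumes "finite S" "S \<subseteq> V" "0 \<le> R"
    and balls: "\<And>v. v \<in> S \<Longrightarrow> 0 \<le> \<rho> v \<and> cball (c v) (\<rho> v) \<subseteq> disk (P v) \<and> cball (c v) (\<rho> v) \<subseteq> cball 0 R"
  shows "(\<Sum>v\<in>S. (\<rho> v)\<^sup>2) \<le> 5 * R\<^sup>2"
proof -
  define k where "k = unit_ball_vol (real DIM(complex))"
  have "0 < k"
    by (simp add: k_def)
  have cball_volume: "emeasure lborel (cball z r) = ennreal (k * r\<^sup>2)" if "0 \<le> r" for z :: complex and r
    using that by (simp add: emeasure_cball k_def)
  have "ennreal (\<Sum>v\<in>S. k * (\<rho> v)\<^sup>2) = (\<Sum>v\<in>S. emeasure lborel (cball (c v) (\<rho> v)))"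
    using balls \<open>0 < k\<close> by (simp add: sum_ennreal cball_volume)
  also have "\<dots> \<le> 5 * emeasure lborel (cball (0::complex) R)"
    using balls by (intro sum_emeasure_le_5_emeasure assms(1,2)) auto
  also have "\<dots> = ennreal (5 * (k * R\<^sup>2))"
    using ennreal_mult''[of "k * R\<^sup>2" 5] \<open>0 < k\<close> assms(3) by (simp add: cball_volume)
  finally have "(\<Sum>v\<in>S. k * (\<rho> v)\<^sup>2) \<le> 5 * (k * R\<^sup>2)"
    using \<open>0 < k\<close> by (subst (asm) ennreal_le_iff) auto
  then have "k * (\<Sum>v\<in>S. (\<rho> v)\<^sup>2) \<le> k * (5 * R\<^sup>2)"
    by (simp add: sum_distrib_left mult.left_commute)
  then show ?thesis
    using \<open>0 < k\<close> by simp
qed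

section \<open>The annulus metric\<close>

definition annulus_disks :: "real \<Rightarrow> 'v set" where
  "annulus_disks a = {v \<in> V. \<not> disk (P v) \<subseteq> ball 0 a \<and> disk (P v) \<inter> cball 0 (2 * a) \<noteq> {}}"

text \<open>The extremal metric of the annulus between the circles of radii a and 2a: a disk crossing
  the annulus is charged its diameter, capped by the width a of the annulus.\<close>
definition annulus_weight :: "real \<Rightarrow> 'v \<Rightarrow> real" where
  "annulus_weight a v = (if v \<in> annulus_disks a then min (2 * radius v) a else 0)"

lemma annulus_disks_subset: "annulus_disks a \<subseteq> V"
  by (auto simp: annulus_disks_def)

lemma finite_annulus_disks: "finite (annulus_disks a)"
  using finite_disks_meeting[of "cball 0 (2 * a)"]
  by (auto simp: annulus_disks_def elim: rev_finite_subset)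

lemma annulus_weight_nonneg: "0 < a \<Longrightarrow> 0 \<le> annulus_weight a v"
  using radius_pos annulus_disks_subset by (fastforce simp: annulus_weight_def)

lemma cball_in_annulus_disk:
  assumes "0 < a" "v \<in> annulus_disks a"
  shows "\<exists>c \<rho>. 0 < \<rho> \<and> cball c \<rho> \<subseteq> disk (P v) \<and> cball c \<rho> \<subseteq> cball 0 (3 * a)
    \<and> annulus_weight a v \<le> 4 * \<rho>"
proof -
  obtain q where q: "q \<in> disk (P v)" "norm q \<le> 2 * a" and "v \<in> V"
    using assms(2) by (auto simp: annulus_disks_def)
  show ?thesis
  proof (cases "2 * radius v \<le> a")
    case True
    have "disk (P v) \<subseteq> cball 0 (3 * a)"
    proof
      fix y
      assume "y \<in> disk (P v)"
      then have "dist 0 y \<le> norm q + 2 * radius v"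
        using q dist_le_diameter_disk dist_triangle[of 0 y q] by fastforce
      then show "y \<in> cball 0 (3 * a)"
        using q True by simp
    qed
    then show ?thesis
      using True assms(2) radius_pos[OF \<open>v \<in> V\<close>]
      by (intro exI[of _ "center v"] exI[of _ "radius v"]) (auto simp: disk_def annulus_weight_def)
  next
    case False
    obtain c where c: "cball c (a / 4) \<subseteq> disk (P v)" "dist q c \<le> a / 4"
      using cball_inside_cball_near[of "a / 4" "radius v" q "center v"] assms(1) False q
      by (auto simp: disk_def)
    have "cball c (a / 4) \<subseteq> cball 0 (3 * a)"
    proof
      fix y
      assume "y \<in> cball c (a / 4)"
      have "dist 0 y \<le> dist 0 q + dist q c + dist c y"
        using dist_triangle[of 0 y q] dist_triangle[of q y c] by linarith
      then show "y \<in> cball 0 (3 * a)"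
        using q c \<open>y \<in> cball c (a / 4)\<close> assms(1) by simp
    qed
    then show ?thesis
      using False assms c by (intro exI[of _ c] exI[of _ "a / 4"]) (auto simp: annulus_weight_def)
  qed
qed

lemma sum_annulus_weight_sq_le:
  assumes "0 < a"
  shows "(\<Sum>v\<in>annulus_disks a. (annulus_weight a v)\<^sup>2) \<le> 720 * a\<^sup>2"
proof -
  obtain c \<rho> where c\<rho>: "\<And>v. v \<in> annulus_disks a \<Longrightarrow> 0 < \<rho> v \<and> cball (c v) (\<rho> v) \<subseteq> disk (P v)
      \<and> cball (c v) (\<rho> v) \<subseteq> cball 0 (3 * a) \<and> annulus_weight a v \<le> 4 * \<rho> v"
    using cball_in_annulus_disk[OF assms] by metis
  have "(annulus_weight a v)\<^sup>2 \<le> 16 * (\<rho> v)\<^sup>2" if "v \<in> annulus_disks a" for v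
  proof -
    have "(annulus_weight a v)\<^sup>2 \<le> (4 * \<rho> v)\<^sup>2"
      using c\<rho>[OF that] annulus_weight_nonneg[OF assms] by (intro power_mono) auto
    then show ?thesis
      by (simp add: power_mult_distrib)
  qed
  then have "(\<Sum>v\<in>annulus_disks a. (annulus_weight a v)\<^sup>2) \<le> (\<Sum>v\<in>annulus_disks a. 16 * (\<rho> v)\<^sup>2)"
    by (rule sum_mono)
  also have "\<dots> = 16 * (\<Sum>v\<in>annulus_disks a. (\<rho> v)\<^sup>2)"
    by (simp add: sum_distrib_left)
  also have "(\<Sum>v\<in>annulus_disks a. (\<rho> v)\<^sup>2) \<le> 5 * (3 * a)\<^sup>2"
    using c\<rho> assms
    by (intro sum_sq_radii_inscribed_le finite_annulus_disks annulus_disks_subset) (auto simp: less_imp_le)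
  finally show ?thesis
    by (simp add: power_mult_distrib)
qed

definition annulus_clamp :: "real \<Rightarrow> complex \<Rightarrow> real" where
  "annulus_clamp a z = min (2 * a) (max a (norm z))"

lemma annulus_clamp_diff_le_weight:
  assumes "0 < a" "v \<in> V" "x \<in> disk (P v)" "y \<in> disk (P v)"
  shows "annulus_clamp a x - annulus_clamp a y \<le> annulus_weight a v"
proof (cases "v \<in> annulus_disks a")
  case True
  have "annulus_clamp a x - annulus_clamp a y \<le> dist x y"
    using norm_triangle_ineq3[of x y] by (auto simp: annulus_clamp_def dist_norm min_def max_def)
  also have "\<dots> \<le> 2 * radius v"
    using assms(3,4) by (rule dist_le_diameter_disk)
  finally show ?thesis
    using True assms(1) by (auto simp: annulus_weight_def annulus_clamp_def min_def max_def)
next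
  case False
  then have "disk (P v) \<subseteq> ball 0 a \<or> disk (P v) \<inter> cball 0 (2 * a) = {}"
    using assms(2) by (auto simp: annulus_disks_def)
  then have "annulus_clamp a x = annulus_clamp a y"
    using assms(1,3,4) by (auto simp: annulus_clamp_def subset_iff disjoint_iff not_le min_def max_def)
  then show ?thesis
    using annulus_weight_nonneg[OF assms(1)] by simp
qed

text \<open>Strong induction: a revisited vertex adds no weight, so one falls back to its first visit.\<close>
lemma annulus_clamp_diff_le_path_weight:
  assumes "0 < a" and p: "\<And>n. adj (p n) (p (Suc n))" and "z \<in> disk (P (p 0))"
  shows "x \<in> disk (P (p m)) \<Longrightarrow>
    annulus_clamp a x - annulus_clamp a z \<le> (\<Sum>v\<in>p ` {..m}. annulus_weight a v)"
proof (induction m arbitrary: x rule: less_induct)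
  case (less m)
  show ?case
  proof (cases m)
    case 0
    then show ?thesis
      using annulus_clamp_diff_le_weight[OF assms(1) path_in_V[of p 0, OF p]] less.prems assms(3)
      by simp
  next
    case (Suc k)
    show ?thesis
    proof (cases "p m \<in> p ` {..k}")
      case True
      then obtain j where "j \<le> k" "p m = p j"
        by auto
      then have "annulus_clamp a x - annulus_clamp a z \<le> (\<Sum>v\<in>p ` {..j}. annulus_weight a v)"
        using less Suc by simp
      also have "\<dots> \<le> (\<Sum>v\<in>p ` {..m}. annulus_weight a v)"
        using \<open>j \<le> k\<close> Suc annulus_weight_nonneg[OF assms(1)] by (intro sum_mono2) auto
      finally show ?thesis .
    next
      case False
      obtain y where y: "y \<in> disk (P (p k))" "y \<in> disk (P (p m))"
        using adj_disks_meet[OF p[of k]] Suc by auto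
      have "annulus_clamp a x - annulus_clamp a z
          = (annulus_clamp a x - annulus_clamp a y) + (annulus_clamp a y - annulus_clamp a z)"
        by simp
      also have "\<dots> \<le> annulus_weight a (p m) + (\<Sum>v\<in>p ` {..k}. annulus_weight a v)"
        using annulus_clamp_diff_le_weight[OF assms(1) path_in_V[of p, OF p] less.prems y(2)]
          less.IH[of k y] y(1) Suc by simp
      also have "\<dots> = (\<Sum>v\<in>p ` {..m}. annulus_weight a v)"
        using False Suc by (simp add: atMost_Suc)
      finally show ?thesis .
    qed
  qed
qed

text \<open>The clamped modulus rises from a to 2a along the path, and each disk accounts for at most
  its weight of the increase.\<close>
lemma annulus_crossing_weight_ge:
  assumes "0 < a" "\<And>n. adj (p n) (p (Suc n))"
    and "disk (P (p 0)) \<subseteq> ball 0 a" "disk (P (p n)) \<inter> cball 0 (2 * a) = {}"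
  shows "a \<le> (\<Sum>v\<in>p ` {..n}. annulus_weight a v)"
proof -
  have "center (p 0) \<in> disk (P (p 0))" "center (p n) \<in> disk (P (p n))"
    using center_in_disk path_in_V[of p, OF assms(2)] by auto
  moreover from this have "annulus_clamp a (center (p 0)) = a" "annulus_clamp a (center (p n)) = 2 * a"
    using assms(1,3,4) by (auto simp: annulus_clamp_def subset_iff disjoint_iff not_le)
  ultimately show ?thesis
    using annulus_clamp_diff_le_path_weight[where p = p, OF assms(1,2)] by fastforce
qed

section \<open>Disjoint annuli and the modulus of paths to infinity\<close>

text \<open>Every disk of the annulus at scale a lies in the ball of radius next_scale a, so the annuli
  at the iterated scales have pairwise disjoint sets of disks.\<close>
definition next_scale :: "real \<Rightarrow> real" where
  "next_scale a = a + 1 + (\<Sum>v\<in>annulus_disks a. norm (center v) + radius v)"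

definition scale :: "real \<Rightarrow> nat \<Rightarrow> real" where
  "scale R0 i = (next_scale ^^ i) R0"

lemma norm_center_add_radius_nonneg:
  assumes "v \<in> annulus_disks a"
  shows "0 \<le> norm (center v) + radius v"
proof -
  have "v \<in> V"
    using assms annulus_disks_subset by blast
  then show ?thesis
    using radius_pos[of v] norm_ge_zero[of "center v"] by linarith
qed

lemma next_scale_ge: "a + 1 \<le> next_scale a"
  using norm_center_add_radius_nonneg by (simp add: next_scale_def sum_nonneg)

lemma annulus_disk_subset_ball_next_scale:
  assumes "0 \<le> a" "v \<in> annulus_disks a"
  shows "disk (P v) \<subseteq> ball 0 (next_scale a)"
proof (rule disk_subset_ball_norm_center)
  have "norm (center v) + radius v \<le> (\<Sum>v\<in>annulus_disks a. norm (center v) + radius v)"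
    by (rule member_le_sum[OF assms(2)]) (auto simp: norm_center_add_radius_nonneg finite_annulus_disks)
  then show "norm (center v) + radius v < next_scale a"
    using assms(1) by (simp add: next_scale_def)
qed

lemma scale_Suc: "scale R0 (Suc i) = next_scale (scale R0 i)"
  by (simp add: scale_def)

lemma scale_le_Suc: "scale R0 i \<le> scale R0 (Suc i)"
  using next_scale_ge[of "scale R0 i"] by (simp add: scale_Suc)

lemma scale_mono: "i \<le> j \<Longrightarrow> scale R0 i \<le> scale R0 j"
  by (rule lift_Suc_mono_le[of "scale R0", OF scale_le_Suc])

lemma scale_ge: "R0 \<le> scale R0 i"
  using scale_mono[of 0 i R0] by (simp add: scale_def)

lemma scale_pos: "0 < R0 \<Longrightarrow> 0 < scale R0 i"
  using scale_ge[of R0 i] by linarith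

lemma annulus_disks_scale_disjoint:
  assumes "0 \<le> R0" "i < j" "v \<in> annulus_disks (scale R0 i)"
  shows "v \<notin> annulus_disks (scale R0 j)"
proof -
  have "disk (P v) \<subseteq> ball 0 (scale R0 (Suc i))"
    using annulus_disk_subset_ball_next_scale[OF _ assms(3)] scale_ge[of R0 i] assms(1)
    by (simp add: scale_Suc)
  also have "\<dots> \<subseteq> ball 0 (scale R0 j)"
    using scale_mono[of "Suc i" j R0] assms(2) by auto
  finally show ?thesis
    by (auto simp: annulus_disks_def)
qed

definition averaged_metric :: "real \<Rightarrow> nat \<Rightarrow> 'v \<Rightarrow> real" where
  "averaged_metric R0 N v = (\<Sum>i<N. annulus_weight (scale R0 i) v / scale R0 i) / real N"

lemma averaged_metric_nonneg: "0 < R0 \<Longrightarrow> 0 \<le> averaged_metric R0 N v"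
  using annulus_weight_nonneg[OF scale_pos] scale_pos
  by (simp add: averaged_metric_def sum_nonneg less_imp_le)

lemma path_leaves_compact:
  assumes "\<And>n. adj (p n) (p (Suc n))" "infinite (range p)" "compact K"
  obtains n where "disk (P (p n)) \<inter> K = {}"
proof -
  have "\<not> range p \<subseteq> {v \<in> V. disk (P v) \<inter> K \<noteq> {}}"
    using assms(2) finite_disks_meeting[OF assms(3)] finite_subset by blast
  then show ?thesis
    using that path_in_V[of p, OF assms(1)] by blast
qed

lemma sum_averaged_metric_ge_1:
  assumes "0 < R0" "0 < N" "\<And>n. adj (p n) (p (Suc n))" "disk (P (p 0)) \<subseteq> ball 0 R0"
    and "disk (P (p n)) \<inter> cball 0 (2 * scale R0 (N - 1)) = {}"
  shows "1 \<le> (\<Sum>v\<in>p ` {..n}. averaged_metric R0 N v)"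
proof -
  have "1 \<le> (\<Sum>v\<in>p ` {..n}. annulus_weight (scale R0 i) v / scale R0 i)" if "i < N" for i
  proof -
    have "0 < scale R0 i"
      using assms(1) by (rule scale_pos)
    have "scale R0 i \<le> scale R0 (N - 1)"
      using that by (intro scale_mono) simp
    then have "disk (P (p n)) \<inter> cball 0 (2 * scale R0 i) = {}"
      using assms(5) by auto
    moreover have "disk (P (p 0)) \<subseteq> ball 0 (scale R0 i)"
      using assms(4) scale_ge[of R0 i] by auto
    ultimately have "scale R0 i \<le> (\<Sum>v\<in>p ` {..n}. annulus_weight (scale R0 i) v)"
      using annulus_crossing_weight_ge[where p = p, OF \<open>0 < scale R0 i\<close> assms(3)] by blast
    then show ?thesis
      using \<open>0 < scale R0 i\<close> by (simp add: sum_divide_distrib[symmetric])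
  qed
  then have "(\<Sum>i<N. 1) \<le> (\<Sum>i<N. \<Sum>v\<in>p ` {..n}. annulus_weight (scale R0 i) v / scale R0 i)"
    by (intro sum_mono) simp
  also have "\<dots> = (\<Sum>v\<in>p ` {..n}. \<Sum>i<N. annulus_weight (scale R0 i) v / scale R0 i)"
    by (rule sum.swap)
  finally have "1 \<le> (\<Sum>v\<in>p ` {..n}. \<Sum>i<N. annulus_weight (scale R0 i) v / scale R0 i) / real N"
    using assms(2) by (simp add: le_divide_eq)
  also have "\<dots> = (\<Sum>v\<in>p ` {..n}. averaged_metric R0 N v)"
    by (simp add: averaged_metric_def sum_divide_distrib)
  finally show ?thesis .
qed

lemma curve_length_averaged_metric_ge_1:
  assumes "0 < R0" "0 < N" "disk (P v0) \<subseteq> ball 0 R0" "\<gamma> \<in> paths_to_infinity adj {v0}"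
  shows "1 \<le> curve_length (averaged_metric R0 N) \<gamma>"
proof -
  obtain p where \<gamma>: "\<gamma> = range p" and "p 0 = v0" and p: "\<And>n. adj (p n) (p (Suc n))"
    and "infinite (range p)"
    using assms(4) unfolding paths_to_infinity_def by auto
  obtain n where "disk (P (p n)) \<inter> cball 0 (2 * scale R0 (N - 1)) = {}"
    using path_leaves_compact[OF p \<open>infinite (range p)\<close> compact_cball] .
  then have "ennreal 1 \<le> ennreal (\<Sum>v\<in>p ` {..n}. averaged_metric R0 N v)"
    using sum_averaged_metric_ge_1[where p = p, OF assms(1,2) p] assms(3) \<open>p 0 = v0\<close> by (simp add: ennreal_leI)
  also have "\<dots> \<le> curve_length (averaged_metric R0 N) \<gamma>"
    using \<gamma> averaged_metric_nonneg[OF assms(1)] by (intro sum_le_curve_length) auto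
  finally show ?thesis
    by simp
qed

lemma averaged_metric_sq:
  assumes "0 < R0"
  shows "(averaged_metric R0 N v)\<^sup>2
    = (\<Sum>i<N. (annulus_weight (scale R0 i) v / scale R0 i)\<^sup>2) / (real N)\<^sup>2"
proof -
  have "(\<Sum>i<N. annulus_weight (scale R0 i) v / scale R0 i)\<^sup>2
      = (\<Sum>i<N. (annulus_weight (scale R0 i) v / scale R0 i)\<^sup>2)"
  proof (rule power2_sum_eq_sum_power2_if_disjoint_support)
    fix i j
    assume "i \<in> {..<N}" "j \<in> {..<N}" "i \<noteq> j"
    then have "v \<notin> annulus_disks (scale R0 i) \<or> v \<notin> annulus_disks (scale R0 j)"
      using annulus_disks_scale_disjoint[of R0] assms by (metis less_imp_le linorder_neqE_nat)
    then show "annulus_weight (scale R0 i) v / scale R0 i = 0 \<or> annulus_weight (scale R0 j) v / scale R0 j = 0"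
      by (auto simp: annulus_weight_def)
  qed simp
  then show ?thesis
    by (simp add: averaged_metric_def power_divide)
qed

lemma metric_area_averaged_metric_le:
  assumes "0 < R0" "0 < N"
  shows "metric_area V (averaged_metric R0 N) \<le> ennreal (720 / real N)"
proof -
  define T where "T = (\<Union>i<N. annulus_disks (scale R0 i))"
  have "finite T" "T \<subseteq> V"
    using finite_annulus_disks annulus_disks_subset by (auto simp: T_def)
  have "averaged_metric R0 N v = 0" if "v \<notin> T" for v
    using that by (simp add: averaged_metric_def annulus_weight_def T_def)
  then have "metric_area V (averaged_metric R0 N) = ennreal (\<Sum>v\<in>T. (averaged_metric R0 N v)\<^sup>2)"
    by (intro metric_area_eq_sum \<open>finite T\<close> \<open>T \<subseteq> V\<close>)
  also have "(\<Sum>v\<in>T. (averaged_metric R0 N v)\<^sup>2)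
      = (\<Sum>i<N. \<Sum>v\<in>T. (annulus_weight (scale R0 i) v / scale R0 i)\<^sup>2) / (real N)\<^sup>2"
    using assms(1) by (simp add: averaged_metric_sq sum_divide_distrib[symmetric] sum.swap[of _ T])
  also have "\<dots> \<le> (\<Sum>i<N. 720) / (real N)\<^sup>2"
  proof (intro divide_right_mono sum_mono)
    fix i
    assume "i \<in> {..<N}"
    have "0 < scale R0 i"
      using assms(1) by (rule scale_pos)
    have "(\<Sum>v\<in>T. (annulus_weight (scale R0 i) v / scale R0 i)\<^sup>2)
        = (\<Sum>v\<in>annulus_disks (scale R0 i). (annulus_weight (scale R0 i) v)\<^sup>2) / (scale R0 i)\<^sup>2"
      using \<open>finite T\<close> \<open>i \<in> {..<N}\<close>
      by (subst sum.mono_neutral_right[of T "annulus_disks (scale R0 i)"])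
        (auto simp: T_def annulus_weight_def power_divide sum_divide_distrib)
    also have "\<dots> \<le> 720"
      using sum_annulus_weight_sq_le[OF \<open>0 < scale R0 i\<close>] \<open>0 < scale R0 i\<close> by (simp add: divide_le_eq)
    finally show "(\<Sum>v\<in>T. (annulus_weight (scale R0 i) v / scale R0 i)\<^sup>2) \<le> 720" .
  qed simp
  also have "\<dots> = 720 / real N"
    using assms(2) by (simp add: power2_eq_square)
  finally show ?thesis
    by (simp add: ennreal_leI)
qed

lemma MOD_paths_to_infinity_eq_0:
  assumes "v0 \<in> V"
  shows "MOD V (paths_to_infinity adj {v0}) = 0"
proof -
  define R0 where "R0 = norm (center v0) + radius v0 + 1"
  have "0 < R0"
    unfolding R0_def using radius_pos[OF assms] norm_ge_zero[of "center v0"] by linarith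
  have "disk (P v0) \<subseteq> ball 0 R0"
    unfolding R0_def by (rule disk_subset_ball_norm_center) simp
  have MOD_le: "MOD V (paths_to_infinity adj {v0}) \<le> ennreal (720 / real N)" if "0 < N" for N
  proof -
    have "admissible V (paths_to_infinity adj {v0}) (averaged_metric R0 N)"
      using curve_length_averaged_metric_ge_1[OF \<open>0 < R0\<close> that \<open>disk (P v0) \<subseteq> ball 0 R0\<close>]
        averaged_metric_nonneg[OF \<open>0 < R0\<close>]
      by (simp add: admissible_def vertex_metric_def)
    then have "MOD V (paths_to_infinity adj {v0}) \<le> metric_area V (averaged_metric R0 N)"
      unfolding MOD_def by (intro INF_lower) simp
    also have "\<dots> \<le> ennreal (720 / real N)"
      using \<open>0 < R0\<close> that by (rule metric_area_averaged_metric_le)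
    finally show ?thesis .
  qed
  have "MOD V (paths_to_infinity adj {v0}) \<le> 0 + ennreal e" if "0 < e" for e
  proof -
    obtain N :: nat where "0 < N" "inverse (real N) < e / 720"
      using ex_inverse_of_nat_less[of "e / 720"] \<open>0 < e\<close> by auto
    then have "ennreal (720 / real N) \<le> ennreal e"
      by (intro ennreal_leI) (simp add: field_simps)
    with MOD_le[OF \<open>0 < N\<close>] show ?thesis
      by simp
  qed
  then have "MOD V (paths_to_infinity adj {v0}) \<le> 0"
    by (rule ennreal_le_epsilon)
  then show ?thesis
    by simp
qed

end

lemma nonobtuse_disk_pattern_if_realizes:
  assumes "simple_graph V adj" "\<forall>u w. adj u w \<longrightarrow> \<Theta> {u, w} \<le> pi / 2"
    and "realizes P V adj \<Theta>" "locally_finite_pattern P V"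
  shows "nonobtuse_disk_pattern V adj P"
proof
  have meet_iff: "disk (P u) \<inter> disk (P w) \<noteq> {} \<longleftrightarrow> tilde_adj V adj \<Theta> u w"
    if "u \<in> V" "w \<in> V" "u \<noteq> w" for u w
    using assms(3) that by (simp add: realizes_def)
  show radius_pos: "0 < snd (P v)" if "v \<in> V" for v
    using assms(3) that by (auto simp: realizes_def disk_pattern_def)
  show "u \<in> V \<and> w \<in> V \<and> disk (P u) \<inter> disk (P w) \<noteq> {}" if "adj u w" for u w
    using assms(1) that meet_iff by (auto simp: simple_graph_def tilde_adj_def)
  show "locally_finite_pattern P V"
    by (fact assms(4))
  show "(snd (P u))\<^sup>2 + (snd (P w))\<^sup>2 \<le> (dist (fst (P u)) (fst (P w)))\<^sup>2"
    if "u \<in> V" "w \<in> V" "u \<noteq> w" for u w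
  proof (cases "disk (P u) \<inter> disk (P w) = {}")
    case True
    have "0 < snd (P u)" "0 < snd (P w)"
      using radius_pos that by auto
    with True have "snd (P u) + snd (P w) < dist (fst (P u)) (fst (P w))"
      by (intro dist_gt_if_disjoint_cballs) (auto simp: disk_def)
    then have "(snd (P u) + snd (P w))\<^sup>2 \<le> (dist (fst (P u)) (fst (P w)))\<^sup>2"
      using \<open>0 < snd (P u)\<close> \<open>0 < snd (P w)\<close> by (intro power_mono) auto
    moreover have "0 \<le> 2 * snd (P u) * snd (P w)"
      using \<open>0 < snd (P u)\<close> \<open>0 < snd (P w)\<close> by simp
    ultimately show ?thesis
      by (simp add: power2_sum)
  next
    case False
    then have "has_dihedral_angle (P u) (P w) (tilde_Theta adj \<Theta> u w)"
      using assms(3) meet_iff that by (simp add: realizes_def)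
    moreover have "tilde_Theta adj \<Theta> u w \<le> pi / 2"
      using assms(2) by (simp add: tilde_Theta_def)
    ultimately show ?thesis
      by (rule radii_le_dist_centers_if_dihedral_angle_le_pi2)
  qed
qed

theorem lemma5p2:
  fixes V :: "'v set" and adj :: "'v \<Rightarrow> 'v \<Rightarrow> bool" and \<Theta> :: "'v set \<Rightarrow> real"
    and P :: "'v \<Rightarrow> complex \<times> real"
  assumes "simple_graph V adj"
    and "connected_graph V adj"
    and "\<forall>u w. adj u w \<longrightarrow> 0 \<le> \<Theta> {u, w} \<and> \<Theta> {u, w} \<le> pi / 2"
    and "realizes P V adj \<Theta>"
    and "locally_finite_pattern P V"
  shows "VEL_parabolic V adj"
proof -
  interpret nonobtuse_disk_pattern V adj P
    using assms(1,3-5) by (intro nonobtuse_disk_pattern_if_realizes) auto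
  obtain v0 where "v0 \<in> V"
    using assms(2) by (auto simp: connected_graph_def)
  then have "VEL V (paths_to_infinity adj {v0}) = \<infinity>"
    using MOD_paths_to_infinity_eq_0 by (simp add: VEL_def)
  with \<open>v0 \<in> V\<close> show ?thesis
    unfolding VEL_parabolic_def by (intro exI[of _ "{v0}"]) auto
qed

end
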